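(* Let $s,t,z$ be positive integers, $p=\min\{\lfloor\frac{z-1}{ts-t}\rfloor,t-1\}$ (with $p=t-1$ when $s=1$), and let $N_{\text{PolyDot-CMPC}}$ and $N_{\text{SSMM}}$ be as in the context. Then $N_{\text{PolyDot-CMPC}}<N_{\text{SSMM}}$ in the two regions 1. $z>\max\{ts,\,ts-t+\frac{pts}{t-1}\}$, $t\ne1$; 2. $\frac{t-1}{t-2}(st-t)<z\le ts$; and for all other values of $s,t,z$, $N_{\text{PolyDot-CMPC}}\ge N_{\text{SSMM}}$.
   Context: $N_{\text{PolyDot-CMPC}}$ is the number of workers needed by the PolyDot-CMPC scheme, given by: with $\theta'=2ts-t$ and $\upsilon'=\max\{ts-2t-s+2,\frac{ts-2t+1}{2}\}$, $N_{\text{PolyDot-CMPC}}=(p+2)ts+\theta'(t-1)+2z-1$ if $ts<z$ or $t=1$; $=2ts+\theta'(t-1)+3z-1$ if $ts-t<z\le ts$, $s,t\ne1$; $=2ts+\theta'(t-1)+2z-1$ if $ts-2t<z\le ts-t$, $s,t\ne1$; $=(t+1)ts+(t-1)(z+t-1)+2z-1$ if $\upsilon'<z\le ts-2t$, $s,t\ne1$; $=\theta't+z$ if $z\le\upsilon'$, $s,t\ne1$; $=t^2+2t+tz-1$ if $s=1$, $t\ge z$, $t\ne1$. $N_{\text{SSMM}}=(t+1)(ts+z)-1$ is the number of workers of the SSMM baseline. Here $s,t$ are the numbers of row/column partitions and $z$ the number of colluding workers. *)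

theory Defs
  imports Complex_Main
begin

definition polydot_p :: "nat \<Rightarrow> nat \<Rightarrow> nat \<Rightarrow> int" where
  "polydot_p s t z =
     (if s = 1 then int t - 1
      else min \<lfloor>real (z - 1) / (real (t * s) - real t)\<rfloor> (int t - 1))"

definition N_PolyDot_CMPC :: "nat \<Rightarrow> nat \<Rightarrow> nat \<Rightarrow> int" where
  "N_PolyDot_CMPC s t z =
    (let S = int s; T = int t; Z = int z; ts = T * S; p = polydot_p s t z;
         \<theta> = 2 * ts - T;
         \<upsilon> = max (real_of_int (ts - 2 * T - S + 2)) (real_of_int (ts - 2 * T + 1) / 2)
     in if ts < Z \<or> t = 1 then (p + 2) * ts + \<theta> * (T - 1) + 2 * Z - 1
        else if s \<noteq> 1 \<and> t \<noteq> 1 \<and> ts - T < Z \<and> Z \<le> ts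
          then 2 * ts + \<theta> * (T - 1) + 3 * Z - 1
        else if s \<noteq> 1 \<and> t \<noteq> 1 \<and> ts - 2 * T < Z \<and> Z \<le> ts - T
          then 2 * ts + \<theta> * (T - 1) + 2 * Z - 1
        else if s \<noteq> 1 \<and> t \<noteq> 1 \<and> \<upsilon> < real_of_int Z \<and> Z \<le> ts - 2 * T
          then (T + 1) * ts + (T - 1) * (Z + T - 1) + 2 * Z - 1
        else if s \<noteq> 1 \<and> t \<noteq> 1 \<and> real_of_int Z \<le> \<upsilon>
          then \<theta> * T + Z
        else if s = 1 \<and> z \<le> t \<and> t \<noteq> 1
          then T ^ 2 + 2 * T + T * Z - 1
        else undefined)"

definition N_SSMM :: "nat \<Rightarrow> nat \<Rightarrow> nat \<Rightarrow> int" where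
  "N_SSMM s t z = (int t + 1) * (int t * int s + int z) - 1"

end

theory Submission
  imports Defs
begin

(* With n = ts, the gap N_SSMM - N_PolyDot-CMPC is an explicit polynomial on each piece of the
   definition of N_PolyDot-CMPC: (t - 1)(z - n + t) - p n for z > n, (t - 2) z - (t - 1)(n - t)
   for n - t < z <= n, z - t for s = 1, and a non-positive quantity for z <= n - t (on the lowest
   piece because z <= upsilon' forces t z + t^2 <= (t - 1) n + 1).  The two regions of the theorem
   are where the first two polynomials are positive, once the denominators t - 1 and t - 2 are
   cleared; for t = 2 the second one is never positive, and for t = 1 the gap vanishes. *)

lemma polydot_p_t_eq_1:
  assumes "s > 0"
  shows "polydot_p s 1 z = 0"
proof -
  have "0 \<le> \<lfloor>real (z - 1) / (real s - 1)\<rfloor>"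
    using assms by (simp add: Suc_le_eq)
  then show ?thesis
    by (simp add: polydot_p_def)
qed

lemma N_SSMM_minus_N_PolyDot_CMPC_large_z:
  assumes "t * s < z \<or> t = 1"
  shows "N_SSMM s t z - N_PolyDot_CMPC s t z
           = (int t - 1) * (int z - int (t * s) + int t) - polydot_p s t z * int (t * s)"
proof -
  have "int t * int s < int z \<or> t = 1"
    using assms by (metis of_nat_less_iff of_nat_mult)
  then show ?thesis
    by (simp add: N_SSMM_def N_PolyDot_CMPC_def Let_def algebra_simps)
qed

lemma N_SSMM_minus_N_PolyDot_CMPC_upper_band:
  assumes "s \<noteq> 1" "t \<noteq> 1" "t * s < z + t" "z \<le> t * s"
  shows "N_SSMM s t z - N_PolyDot_CMPC s t z
           = (int t - 2) * int z - (int t - 1) * (int (t * s) - int t)"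
proof -
  have "int t * int s - int t < int z" "int z \<le> int t * int s"
    using assms(3,4) by (simp_all flip: of_nat_mult of_nat_add)
  then show ?thesis
    using assms(1,2) by (simp add: N_SSMM_def N_PolyDot_CMPC_def Let_def algebra_simps)
qed

lemma N_SSMM_minus_N_PolyDot_CMPC_middle_band:
  assumes "s \<noteq> 1" "t \<noteq> 1" "t * s < z + 2 * t" "z + t \<le> t * s"
  shows "N_SSMM s t z - N_PolyDot_CMPC s t z = (int t - 1) * (int z - int (t * s) + int t)"
proof -
  have "int t * int s - 2 * int t < int z" "int z \<le> int t * int s - int t"
    using assms(3,4) by (simp_all flip: of_nat_mult of_nat_add)
  then show ?thesis
    using assms(1,2) by (simp add: N_SSMM_def N_PolyDot_CMPC_def Let_def algebra_simps)
qed

lemma mult_le_of_le_upsilon: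
  fixes T S Z :: int
  assumes "T \<ge> 2" "S \<ge> 1"
    and "real_of_int Z \<le> max (real_of_int (T * S - 2 * T - S + 2)) (real_of_int (T * S - 2 * T + 1) / 2)"
  shows "T * Z + T\<^sup>2 \<le> (T - 1) * (T * S) + 1"
proof (cases "Z \<le> T * S - 2 * T - S + 2")
  case True
  then have "T * Z \<le> T * (T * S - 2 * T - S + 2)"
    using assms(1) by (intro mult_left_mono) auto
  moreover have "0 \<le> (T - 1)\<^sup>2" by simp
  ultimately show ?thesis by (simp add: power2_eq_square algebra_simps)
next
  case False
  then have "real_of_int Z \<le> real_of_int (T * S - 2 * T + 1) / 2"
    using assms(3) by (metis le_max_iff_disj of_int_le_iff)
  then have "real_of_int (2 * Z) \<le> real_of_int (T * S - 2 * T + 1)"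
    by simp
  then have "2 * Z \<le> T * S - 2 * T + 1"
    by (simp only: of_int_le_iff)
  then have "T * (2 * Z) \<le> T * (T * S - 2 * T + 1)"
    using assms(1) by (intro mult_left_mono) auto
  moreover have "0 \<le> (T - 2) * (T * S - 1)"
    using assms by (intro mult_nonneg_nonneg) auto
  ultimately show ?thesis by (simp add: power2_eq_square algebra_simps)
qed

lemma N_SSMM_le_N_PolyDot_CMPC_low_z:
  assumes "s > 0" "t > 1" "s \<noteq> 1" "z + 2 * t \<le> t * s"
  shows "N_SSMM s t z \<le> N_PolyDot_CMPC s t z"
proof -
  define \<upsilon> where "\<upsilon> = max (real_of_int (int t * int s - 2 * int t - int s + 2))
                            (real_of_int (int t * int s - 2 * int t + 1) / 2)"
  have z_low: "int z \<le> int t * int s - 2 * int t"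
    using assms(4) by (simp flip: of_nat_mult of_nat_add)
  have N_PolyDot_CMPC_low_z: "N_PolyDot_CMPC s t z =
      (if \<upsilon> < real_of_int (int z)
       then (int t + 1) * (int t * int s) + (int t - 1) * (int z + int t - 1) + 2 * int z - 1
       else (2 * (int t * int s) - int t) * int t + int z)"
    using assms(2,3) z_low unfolding N_PolyDot_CMPC_def Let_def \<upsilon>_def[symmetric] by simp
  show ?thesis
  proof (cases "\<upsilon> < real_of_int (int z)")
    case True
    have "0 \<le> (int t - 1) * (int t - 1)" by simp
    then show ?thesis
      using True by (simp add: N_PolyDot_CMPC_low_z N_SSMM_def algebra_simps)
  next
    case False
    then have "real_of_int (int z) \<le> \<upsilon>"
      by simp
    then have "int t * int z + (int t)\<^sup>2 \<le> (int t - 1) * (int t * int s) + 1"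
      unfolding \<upsilon>_def using assms(1,2) by (intro mult_le_of_le_upsilon) auto
    then show ?thesis
      using False by (simp add: N_PolyDot_CMPC_low_z N_SSMM_def power2_eq_square algebra_simps)
  qed
qed

lemma N_SSMM_minus_N_PolyDot_CMPC_s_eq_1:
  assumes "t \<noteq> 1" "z \<le> t"
  shows "N_SSMM 1 t z - N_PolyDot_CMPC 1 t z = int z - int t"
  using assms by (simp add: N_SSMM_def N_PolyDot_CMPC_def Let_def power2_eq_square algebra_simps)

lemma N_PolyDot_CMPC_less_N_SSMM_iff_moderate_z:
  assumes "s > 1" "t > 1" "z \<le> t * s"
  shows "N_PolyDot_CMPC s t z < N_SSMM s t z
           \<longleftrightarrow> (int t - 1) * (int (t * s) - int t) < (int t - 2) * int z"
proof (cases "t * s < z + t")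
  case True
  then show ?thesis
    using assms N_SSMM_minus_N_PolyDot_CMPC_upper_band[of s t z] by simp linarith
next
  case False
  then have z_le: "int z \<le> int (t * s) - int t"
    by (simp flip: of_nat_add of_nat_mult)
  have "N_SSMM s t z \<le> N_PolyDot_CMPC s t z"
  proof (cases "t * s < z + 2 * t")
    case True
    have "(int t - 1) * (int z - int (t * s) + int t) \<le> 0"
      using z_le assms(2) by (intro mult_nonneg_nonpos) auto
    then show ?thesis
      using True False assms N_SSMM_minus_N_PolyDot_CMPC_middle_band[of s t z] by simp
  next
    case False
    then show ?thesis
      using assms by (intro N_SSMM_le_N_PolyDot_CMPC_low_z) auto
  qed
  moreover have "(int t - 2) * int z \<le> (int t - 1) * (int (t * s) - int t)"
  proof -
    have "int t \<le> int (t * s)"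
      using assms(1) by (intro of_nat_mono) simp
    have "(int t - 2) * int z \<le> (int t - 2) * (int (t * s) - int t)"
      using z_le assms(2) by (intro mult_left_mono) auto
    also have "\<dots> \<le> (int t - 1) * (int (t * s) - int t)"
      using \<open>int t \<le> int (t * s)\<close> by (intro mult_right_mono) auto
    finally show ?thesis .
  qed
  ultimately show ?thesis
    by simp
qed

lemma large_z_threshold_less_iff:
  fixes P :: int
  assumes "t > 1"
  shows "real (t * s) - real t + real_of_int P * real (t * s) / (real t - 1) < real z
           \<longleftrightarrow> P * int (t * s) < (int t - 1) * (int z - int (t * s) + int t)"
proof -
  have "real t - 1 > 0"
    using assms by simp
  then have "real (t * s) - real t + real_of_int P * real (t * s) / (real t - 1) < real z
      \<longleftrightarrow> real_of_int (P * int (t * s)) < real_of_int ((int t - 1) * (int z - int (t * s) + int t))"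
    by (simp add: field_simps)
  then show ?thesis
    by (simp only: of_int_less_iff)
qed

lemma moderate_z_threshold_less_iff:
  assumes "t > 2"
  shows "(real t - 1) / (real t - 2) * (real (s * t) - real t) < real z
           \<longleftrightarrow> (int t - 1) * (int (t * s) - int t) < (int t - 2) * int z"
proof -
  have "real t - 2 > 0"
    using assms by simp
  then have "(real t - 1) / (real t - 2) * (real (s * t) - real t) < real z
      \<longleftrightarrow> real_of_int ((int t - 1) * (int (t * s) - int t)) < real_of_int ((int t - 2) * int z)"
    by (simp add: field_simps)
  then show ?thesis
    by (simp only: of_int_less_iff)
qed

theorem lemma2:
  fixes s t z :: nat
  assumes "s > 0" and "t > 0" and "z > 0"
  shows "N_PolyDot_CMPC s t z < N_SSMM s t z \<longleftrightarrow>
           ((t \<noteq> 1 \<and>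
             real z > max (real (t * s))
                          (real (t * s) - real t
                           + real_of_int (polydot_p s t z) * real (t * s) / (real t - 1)))
          \<or> (s \<noteq> 1 \<and> t > 2 \<and>
             (real t - 1) / (real t - 2) * (real (s * t) - real t) < real z \<and> z \<le> t * s))"
proof -
  consider (t_eq_1) "t = 1" | (large_z) "t > 1" "t * s < z"
    | (s_eq_1) "t > 1" "z \<le> t * s" "s = 1" | (moderate_z) "t > 1" "z \<le> t * s" "s > 1"
    using assms by linarith
  then show ?thesis
  proof cases
    case t_eq_1
    then have "N_SSMM s t z = N_PolyDot_CMPC s t z"
      using N_SSMM_minus_N_PolyDot_CMPC_large_z[of t s z] polydot_p_t_eq_1[OF assms(1)] by simp
    then show ?thesis
      using t_eq_1 by simp
  next
    case large_z
    then have "real (t * s) < real z"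
      by (metis of_nat_less_iff)
    moreover have "N_PolyDot_CMPC s t z < N_SSMM s t z
        \<longleftrightarrow> polydot_p s t z * int (t * s) < (int t - 1) * (int z - int (t * s) + int t)"
      using large_z N_SSMM_minus_N_PolyDot_CMPC_large_z[of t s z] by linarith
    ultimately show ?thesis
      using large_z large_z_threshold_less_iff[of t s "polydot_p s t z" z]
      by auto
  next
    case s_eq_1
    then show ?thesis
      using N_SSMM_minus_N_PolyDot_CMPC_s_eq_1[of t z] by simp
  next
    case moderate_z
    have "\<not> real (t * s) < real z"
      using moderate_z(2) by (metis not_less of_nat_le_iff)
    moreover have "N_PolyDot_CMPC s t z < N_SSMM s t z
        \<longleftrightarrow> (int t - 1) * (int (t * s) - int t) < (int t - 2) * int z"
      using moderate_z by (intro N_PolyDot_CMPC_less_N_SSMM_iff_moderate_z)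
    ultimately show ?thesis
      using moderate_z moderate_z_threshold_less_iff[of t s z]
      by (cases "t = 2") auto
  qed
qed

end
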